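(* Let $(X,d)$ be a finite metric space and $\alpha\ge 1$. If there is an $\alpha$-competitive randomized online algorithm for the continuous-time MTS model on $(X,d)$ (for piecewise continuous cost paths), then there is an $\alpha$-competitive randomized online algorithm for the discrete-time MTS model on $(X,d)$.
   Context: Discrete-time MTS: initial state $\rho_0\in X$; input a finite sequence of cost functions $c_t:X\to\mathbb R_+$; a randomized online algorithm chooses a random state $\rho_t$ whose law depends only on $c_1,\dots,c_t$, with cost $\sum_t[c_t(\rho_t)+d(\rho_{t-1},\rho_t)]$; $\mathsf{cost}^*$ is the infimum of this over deterministic state sequences from $\rho_0$. Continuous-time MTS: the input is a piecewise continuous path $(c(t))_{t\ge 0}$ of cost functions $c(t):X\to\mathbb R_+$ (supported on a bounded time interval). An online algorithm maps, for each $T\ge 0$, the path $(c(t))_{t\in[0,T]}$ to a random state $\rho(T)\in X$ (with $\rho$ piecewise constant, $\rho(0)=\rho_0$), paying service cost $\mathbb E\int_0^\infty c(t)(\rho(t))\,dt$ plus movement cost $\mathbb E\sum_{t:\rho(t^-)\ne\rho(t)}d(\rho(t^-),\rho(t))$. The offline optimum is the infimum of the same total cost over deterministic such paths starting from $\rho_0$. In both models, $\alpha$-competitive means: for every $\rho_0$ there is $\beta$ with expected online cost $\le\alpha\cdot$(offline optimum)$+\beta$ for every input. *)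

theory Defs
  imports "HOL-Probability.Probability"
begin

definition metric_on :: "('x \<Rightarrow> 'x \<Rightarrow> real) \<Rightarrow> bool" where
  "metric_on d \<longleftrightarrow>
     (\<forall>x y. d x y = 0 \<longleftrightarrow> x = y) \<and>
     (\<forall>x y. d x y = d y x) \<and>
     (\<forall>x y z. d x z \<le> d x y + d y z)"

text \<open>A randomized online algorithm for a given initial state is described by the law
  of its trajectory (rho_1, ..., rho_T) for every input sequence (c_1, ..., c_T);
  online-ness: the law of (rho_1, ..., rho_t) depends only on (c_1, ..., c_t).\<close>

definition nonneg_costs :: "('x \<Rightarrow> real) list \<Rightarrow> bool" where
  "nonneg_costs cs \<longleftrightarrow> (\<forall>c\<in>set cs. \<forall>x. 0 \<le> c x)"

definition disc_online_alg :: "(('x \<Rightarrow> real) list \<Rightarrow> 'x list pmf) \<Rightarrow> bool" where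
  "disc_online_alg P \<longleftrightarrow>
     (\<forall>cs. nonneg_costs cs \<longrightarrow>
        (\<forall>xs\<in>set_pmf (P cs). length xs = length cs) \<and>
        (\<forall>t. map_pmf (take t) (P cs) = P (take t cs)))"

definition disc_cost ::
  "('x \<Rightarrow> 'x \<Rightarrow> real) \<Rightarrow> 'x \<Rightarrow> ('x \<Rightarrow> real) list \<Rightarrow> 'x list \<Rightarrow> real" where
  "disc_cost d rho0 cs xs =
     (\<Sum>i<length cs. (cs ! i) (xs ! i) + d ((rho0 # xs) ! i) (xs ! i))"

definition disc_opt :: "('x \<Rightarrow> 'x \<Rightarrow> real) \<Rightarrow> 'x \<Rightarrow> ('x \<Rightarrow> real) list \<Rightarrow> real" where
  "disc_opt d rho0 cs = (INF xs\<in>{xs. length xs = length cs}. disc_cost d rho0 cs xs)"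

definition disc_competitive :: "('x \<Rightarrow> 'x \<Rightarrow> real) \<Rightarrow> real \<Rightarrow> bool" where
  "disc_competitive d \<alpha> \<longleftrightarrow>
     (\<forall>rho0. \<exists>P \<beta>. disc_online_alg P \<and>
        (\<forall>cs. nonneg_costs cs \<longrightarrow>
           measure_pmf.expectation (P cs) (disc_cost d rho0 cs) \<le> \<alpha> * disc_opt d rho0 cs + \<beta>))"

definition cost_path :: "(real \<Rightarrow> 'x \<Rightarrow> real) \<Rightarrow> bool" where
  "cost_path c \<longleftrightarrow>
     (\<forall>t x. 0 \<le> c t x) \<and>
     (\<exists>B. \<forall>t x. (t < 0 \<or> B < t) \<longrightarrow> c t x = 0) \<and>
     (\<exists>S. finite S \<and> (\<forall>x. \<forall>t. t \<notin> S \<longrightarrow> isCont (\<lambda>s. c s x) t)) \<and>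
     (\<forall>x t. (\<exists>l. ((\<lambda>s. c s x) \<longlongrightarrow> l) (at_left t)) \<and>
            (\<exists>l. ((\<lambda>s. c s x) \<longlongrightarrow> l) (at_right t)))"

text \<open>Piecewise constant state paths on [0,infinity): right-continuous with left limits
  (for a discrete state space this means a step function with finitely many jumps
  on every bounded interval).\<close>

definition step_path :: "(real \<Rightarrow> 'x) \<Rightarrow> bool" where
  "step_path \<rho> \<longleftrightarrow>
     (\<forall>t\<ge>0. \<forall>\<^sub>F s in at_right t. \<rho> s = \<rho> t) \<and>
     (\<forall>t>0. \<exists>x. \<forall>\<^sub>F s in at_left t. \<rho> s = x)"

definition left_val :: "(real \<Rightarrow> 'x) \<Rightarrow> real \<Rightarrow> 'x" where
  "left_val \<rho> t = (THE x. \<forall>\<^sub>F s in at_left t. \<rho> s = x)"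

definition jumps :: "(real \<Rightarrow> 'x) \<Rightarrow> real set" where
  "jumps \<rho> = {t. 0 < t \<and> left_val \<rho> t \<noteq> \<rho> t}"

definition service_cost :: "(real \<Rightarrow> 'x \<Rightarrow> real) \<Rightarrow> (real \<Rightarrow> 'x) \<Rightarrow> ennreal" where
  "service_cost c \<rho> = (\<integral>\<^sup>+ t\<in>{0..}. ennreal (c t (\<rho> t)) \<partial>lborel)"

definition movement_cost :: "('x \<Rightarrow> 'x \<Rightarrow> real) \<Rightarrow> (real \<Rightarrow> 'x) \<Rightarrow> ennreal" where
  "movement_cost d \<rho> = (\<integral>\<^sup>+ t. ennreal (d (left_val \<rho> t) (\<rho> t)) \<partial>count_space (jumps \<rho>))"

definition cont_cost ::
  "('x \<Rightarrow> 'x \<Rightarrow> real) \<Rightarrow> (real \<Rightarrow> 'x \<Rightarrow> real) \<Rightarrow> (real \<Rightarrow> 'x) \<Rightarrow> ennreal" where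
  "cont_cost d c \<rho> = service_cost c \<rho> + movement_cost d \<rho>"

definition cont_opt :: "('x \<Rightarrow> 'x \<Rightarrow> real) \<Rightarrow> 'x \<Rightarrow> (real \<Rightarrow> 'x \<Rightarrow> real) \<Rightarrow> ennreal" where
  "cont_opt d rho0 c = (INF \<rho>\<in>{\<rho>. step_path \<rho> \<and> \<rho> 0 = rho0}. cont_cost d c \<rho>)"

text \<open>A randomized continuous-time online algorithm with initial state rho0: a probability
  space M of random seeds and a map A: for seed w, input path c and time T, the state
  A w c T, which depends only on the restriction of c to [0,T].\<close>

definition cont_online_alg ::
  "('x \<Rightarrow> 'x \<Rightarrow> real) \<Rightarrow> 'x \<Rightarrow> 'w measure \<Rightarrow> ('w \<Rightarrow> (real \<Rightarrow> 'x \<Rightarrow> real) \<Rightarrow> real \<Rightarrow> 'x) \<Rightarrow> bool" where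
  "cont_online_alg d rho0 M A \<longleftrightarrow>
     prob_space M \<and>
     (\<forall>c. cost_path c \<longrightarrow>
        (\<forall>w\<in>space M. A w c 0 = rho0 \<and> step_path (A w c)) \<and>
        (\<forall>T. (\<lambda>w. A w c T) \<in> measurable M (count_space UNIV)) \<and>
        (\<lambda>w. cont_cost d c (A w c)) \<in> borel_measurable M) \<and>
     (\<forall>c c' T. cost_path c \<and> cost_path c' \<and> (\<forall>t\<in>{0..T}. c t = c' t) \<longrightarrow>
        (\<forall>w\<in>space M. A w c T = A w c' T))"

definition cont_competitive ::
  "'w itself \<Rightarrow> ('x \<Rightarrow> 'x \<Rightarrow> real) \<Rightarrow> real \<Rightarrow> bool" where
  "cont_competitive _ d \<alpha> \<longleftrightarrow>
     (\<forall>rho0. \<exists>(M :: 'w measure) A \<beta>. cont_online_alg d rho0 M A \<and>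
        (\<forall>c. cost_path c \<longrightarrow>
           (\<integral>\<^sup>+ w. cont_cost d c (A w c) \<partial>M) \<le> ennreal \<alpha> * cont_opt d rho0 c + ennreal \<beta>))"

end

theory Submission
  imports Defs
begin

text \<open>A discrete input \<open>c\<^sub>1, \<dots>, c\<^sub>n\<close> is played in continuous time by charging
  \<open>c\<^sub>i\<close> during \<open>[i, i+1)\<close>. Since nothing is charged during \<open>[0,1)\<close>, any discrete
  solution, played as a step path, costs the same in continuous time; hence the continuous
  optimum is at most the discrete one.

  Conversely, run the continuous-time algorithm on this input and let step \<open>i\<close> of the
  discrete algorithm go to the cheapest state for \<open>c\<^sub>i\<close> among those the continuous path
  occupies during \<open>[i, i+1)\<close>. Its service cost is at most the continuous service cost of
  that interval, and since consecutive chosen states are visited in order by the continuous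
  path, the triangle inequality bounds its movement by the continuous movement. The choice
  depends only on the input up to time \<open>i+1\<close>, i.e. on \<open>c\<^sub>1, \<dots>, c\<^sub>i\<close>.\<close>

lemma metric_on_refl: "metric_on d \<Longrightarrow> d x x = 0"
  unfolding metric_on_def by blast

lemma metric_on_nonneg:
  assumes "metric_on d" shows "0 \<le> d x y"
proof -
  have "d x x \<le> d x y + d y x" "d x x = 0" "d y x = d x y"
    using assms unfolding metric_on_def by blast+
  then show ?thesis by linarith
qed

lemma ennreal_metric_on_triangle:
  assumes "metric_on d"
  shows "ennreal (d x z) \<le> ennreal (d x y) + ennreal (d y z)"
proof -
  have "d x z \<le> d x y + d y z" using assms unfolding metric_on_def by blast
  then show ?thesis
    using metric_on_nonneg[OF assms] by (simp add: ennreal_plus[symmetric] del: ennreal_plus)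
qed

lemma eventually_floor_at_right: "\<forall>\<^sub>F s in at_right (t::real). h \<lfloor>s\<rfloor> = h \<lfloor>t\<rfloor>"
proof (rule eventually_at_rightI[of t "of_int \<lfloor>t\<rfloor> + 1"])
  fix s assume "s \<in> {t<..<of_int \<lfloor>t\<rfloor> + 1}"
  then have "\<lfloor>s\<rfloor> = \<lfloor>t\<rfloor>" by (auto simp: floor_eq_iff) (smt (verit) of_int_floor_le)
  then show "h \<lfloor>s\<rfloor> = h \<lfloor>t\<rfloor>" by simp
qed linarith

lemma eventually_floor_at_left: "\<forall>\<^sub>F s in at_left (t::real). h \<lfloor>s\<rfloor> = h (\<lceil>t\<rceil> - 1)"
proof (rule eventually_at_leftI[of "of_int \<lceil>t\<rceil> - 1" t])
  fix s assume "s \<in> {of_int \<lceil>t\<rceil> - 1<..<t}"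
  then have "\<lfloor>s\<rfloor> = \<lceil>t\<rceil> - 1" by (auto simp: floor_eq_iff) (smt (verit) le_of_int_ceiling)
  then show "h \<lfloor>s\<rfloor> = h (\<lceil>t\<rceil> - 1)" by simp
qed linarith

lemma ceiling_minus_one_eq_floor: "(t::real) \<notin> \<int> \<Longrightarrow> \<lceil>t\<rceil> - 1 = \<lfloor>t\<rfloor>"
  by (metis Ints_of_int add_diff_cancel_right' ceiling_altdef)

lemma eventually_floor_at: "(t::real) \<notin> \<int> \<Longrightarrow> \<forall>\<^sub>F s in at t. h \<lfloor>s\<rfloor> = h \<lfloor>t\<rfloor>"
  using eventually_floor_at_left[of h t] eventually_floor_at_right[of h t]
  by (simp add: eventually_at_split ceiling_minus_one_eq_floor)

lemma left_val_eqI: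
  assumes "\<forall>\<^sub>F s in at_left t. \<rho> s = x"
  shows "left_val \<rho> t = x"
  unfolding left_val_def
proof (rule the_equality)
  fix y assume "\<forall>\<^sub>F s in at_left t. \<rho> s = y"
  with assms have "\<forall>\<^sub>F s in at_left t. \<rho> s = x \<and> \<rho> s = y" by (rule eventually_conj)
  moreover have "at_left t \<noteq> bot" by simp
  ultimately show "y = x" using eventually_happens by blast
qed (fact assms)

section \<open>Embedding a discrete input\<close>

text \<open>With 0-based list indices, \<open>cs ! i\<close> is \<open>c\<^sub>i\<^sub>+\<^sub>1\<close> and is charged during
  \<open>slot i = [i+1, i+2)\<close>.\<close>

definition slot :: "nat \<Rightarrow> real set" where
  "slot i = {real i + 1..<real i + 2}"

lemma slot_iff_floor: "t \<in> slot i \<longleftrightarrow> \<lfloor>t\<rfloor> = int i + 1"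
  by (auto simp: slot_def floor_eq_iff)

lemma slot_start: "real i + 1 \<in> slot i"
  by (simp add: slot_def)

lemma slot_nonneg: "t \<in> slot i \<Longrightarrow> 0 \<le> t"
  by (simp add: slot_def)

definition slot_cost :: "('x \<Rightarrow> real) list \<Rightarrow> int \<Rightarrow> 'x \<Rightarrow> real" where
  "slot_cost cs k = (if 1 \<le> k \<and> k \<le> int (length cs) then cs ! (nat k - 1) else (\<lambda>_. 0))"

definition embed_costs :: "('x \<Rightarrow> real) list \<Rightarrow> real \<Rightarrow> 'x \<Rightarrow> real" where
  "embed_costs cs t = slot_cost cs \<lfloor>t\<rfloor>"

lemma embed_costs_slot: "t \<in> slot i \<Longrightarrow> i < length cs \<Longrightarrow> embed_costs cs t = cs ! i"
  by (simp add: embed_costs_def slot_cost_def slot_iff_floor nat_add_distrib)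

lemma embed_costs_outside_slots:
  "(\<And>i. i < length cs \<Longrightarrow> t \<notin> slot i) \<Longrightarrow> embed_costs cs t = (\<lambda>_. 0)"
proof (rule ccontr)
  assume outside: "\<And>i. i < length cs \<Longrightarrow> t \<notin> slot i" and "embed_costs cs t \<noteq> (\<lambda>_. 0)"
  then have "1 \<le> \<lfloor>t\<rfloor>" "\<lfloor>t\<rfloor> \<le> int (length cs)"
    by (auto simp: embed_costs_def slot_cost_def split: if_splits)
  then have "nat (\<lfloor>t\<rfloor> - 1) < length cs" "t \<in> slot (nat (\<lfloor>t\<rfloor> - 1))"
    by (simp_all add: slot_iff_floor nat_less_iff)
  with outside show False by blast
qed

lemma embed_costs_take:
  assumes "0 \<le> t" "t < real k + 1"
  shows "embed_costs (take k cs) t = embed_costs cs t"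
proof -
  have "\<lfloor>t\<rfloor> \<le> int k" using assms by (simp add: floor_le_iff)
  then have "1 \<le> \<lfloor>t\<rfloor> \<Longrightarrow> nat \<lfloor>t\<rfloor> - 1 < k" by linarith
  with \<open>\<lfloor>t\<rfloor> \<le> int k\<close> show ?thesis by (auto simp: embed_costs_def slot_cost_def min_def)
qed

lemma embed_costs_nonneg:
  assumes "nonneg_costs cs"
  shows "0 \<le> embed_costs cs t x"
proof (cases "1 \<le> \<lfloor>t\<rfloor> \<and> \<lfloor>t\<rfloor> \<le> int (length cs)")
  case True
  then have "nat \<lfloor>t\<rfloor> - 1 < length cs" by linarith
  with True assms show ?thesis
    by (auto simp: embed_costs_def slot_cost_def nonneg_costs_def dest: nth_mem)
qed (auto simp: embed_costs_def slot_cost_def)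

lemma isCont_embed_costs:
  assumes "t \<notin> of_int ` {0..int (length cs) + 1}"
  shows "isCont (\<lambda>s. embed_costs cs s x) t"
  unfolding isCont_def
proof (rule tendsto_eventually)
  show "\<forall>\<^sub>F s in at t. embed_costs cs s x = embed_costs cs t x"
  proof (cases "t \<in> \<int>")
    case False
    then show ?thesis unfolding embed_costs_def by (rule eventually_floor_at)
  next
    case True
    then obtain k where k: "t = of_int k" by (auto elim: Ints_cases)
    with assms have "k < 0 \<or> k > int (length cs) + 1" by auto
    then have "slot_cost cs (k - 1) x = slot_cost cs k x" by (auto simp: slot_cost_def)
    moreover have "\<lceil>t\<rceil> = k" "\<lfloor>t\<rfloor> = k" using k by auto
    ultimately show ?thesis unfolding embed_costs_def eventually_at_split
      using eventually_floor_at_left[of "\<lambda>k. slot_cost cs k x" t]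
        eventually_floor_at_right[of "\<lambda>k. slot_cost cs k x" t] by simp
  qed
qed

lemma embed_costs_one_sided_limits:
  shows "\<exists>l. ((\<lambda>s. embed_costs cs s x) \<longlongrightarrow> l) (at_left t)"
    and "\<exists>l. ((\<lambda>s. embed_costs cs s x) \<longlongrightarrow> l) (at_right t)"
  unfolding embed_costs_def
  by (rule exI, rule tendsto_eventually, rule eventually_floor_at_left[where h="\<lambda>k. slot_cost cs k x"])
    (rule exI, rule tendsto_eventually, rule eventually_floor_at_right[where h="\<lambda>k. slot_cost cs k x"])

lemma cost_path_embed_costs:
  assumes "nonneg_costs cs"
  shows "cost_path (embed_costs cs)"
  unfolding cost_path_def
proof (intro conjI)
  show "\<forall>t x. 0 \<le> embed_costs cs t x"
    using assms by (auto intro: embed_costs_nonneg)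
  show "\<exists>B. \<forall>t x. (t < 0 \<or> B < t) \<longrightarrow> embed_costs cs t x = 0"
  proof (intro exI[of _ "real (length cs) + 1"] allI impI)
    fix t :: real and x assume "t < 0 \<or> real (length cs) + 1 < t"
    then have "\<lfloor>t\<rfloor> < 1 \<or> \<lfloor>t\<rfloor> > int (length cs)"
      by (auto simp: floor_less_iff less_floor_iff)
    then show "embed_costs cs t x = 0" by (auto simp: embed_costs_def slot_cost_def)
  qed
  show "\<exists>S. finite S \<and> (\<forall>x t. t \<notin> S \<longrightarrow> isCont (\<lambda>s. embed_costs cs s x) t)"
    by (blast intro: isCont_embed_costs)
qed (blast intro: embed_costs_one_sided_limits)

lemma embed_costs_indicator_sum:
  "ennreal (embed_costs cs t x) * indicator {0..} t
     = (\<Sum>i<length cs. ennreal ((cs ! i) x) * indicator (slot i) t)"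
proof (cases "\<exists>i<length cs. t \<in> slot i")
  case True
  then obtain i where i: "i < length cs" "t \<in> slot i" by blast
  then have "indicator (slot j) t = (indicator {i} j :: ennreal)" for j
    by (auto simp: indicator_def slot_iff_floor)
  with i show ?thesis by (simp add: embed_costs_slot slot_nonneg indicator_def)
next
  case False
  then show ?thesis by (auto simp: embed_costs_outside_slots intro!: sum.neutral)
qed

lemma nn_integral_slots:
  "(\<integral>\<^sup>+ t. (\<Sum>i<n. a i * indicator (slot i) t) \<partial>lborel) = (\<Sum>i<n. a i)"
  by (subst nn_integral_sum) (auto simp: nn_integral_cmult_indicator slot_def)

lemma service_cost_embed_costs_le:
  assumes "\<And>i t. i < length cs \<Longrightarrow> t \<in> slot i \<Longrightarrow> (cs ! i) (\<rho> t) \<le> b i"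
  shows "service_cost (embed_costs cs) \<rho> \<le> (\<Sum>i<length cs. ennreal (b i))"
proof -
  have "service_cost (embed_costs cs) \<rho>
      \<le> (\<integral>\<^sup>+ t. (\<Sum>i<length cs. ennreal (b i) * indicator (slot i) t) \<partial>lborel)"
    unfolding service_cost_def embed_costs_indicator_sum
    by (intro nn_integral_mono sum_mono) (auto simp: indicator_def assms ennreal_leI)
  then show ?thesis by (simp only: nn_integral_slots)
qed

lemma service_cost_embed_costs_ge:
  assumes "\<And>i t. i < length cs \<Longrightarrow> t \<in> slot i \<Longrightarrow> b i \<le> (cs ! i) (\<rho> t)"
  shows "(\<Sum>i<length cs. ennreal (b i)) \<le> service_cost (embed_costs cs) \<rho>"
proof -
  have "(\<integral>\<^sup>+ t. (\<Sum>i<length cs. ennreal (b i) * indicator (slot i) t) \<partial>lborel)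
      \<le> service_cost (embed_costs cs) \<rho>"
    unfolding service_cost_def embed_costs_indicator_sum
    by (intro nn_integral_mono sum_mono) (auto simp: indicator_def assms ennreal_leI)
  then show ?thesis by (simp only: nn_integral_slots)
qed

section \<open>The offline optimum\<close>

lemma disc_cost_nonneg:
  assumes "metric_on d" "nonneg_costs cs"
  shows "0 \<le> disc_cost d x0 cs xs"
  unfolding disc_cost_def using assms metric_on_nonneg[OF assms(1)] nth_mem[of _ cs]
  by (intro sum_nonneg add_nonneg_nonneg) (auto simp: nonneg_costs_def)

lemma ennreal_disc_cost:
  assumes "metric_on d" "nonneg_costs cs" "length xs = length cs"
  shows "ennreal (disc_cost d x0 cs xs)
     = (\<Sum>i<length cs. ennreal ((cs ! i) (xs ! i)))
       + (\<Sum>i<length cs. ennreal (d ((x0 # xs) ! i) (xs ! i)))"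
proof -
  have "0 \<le> (cs ! i) (xs ! i)" if "i < length cs" for i
    using assms(2) nth_mem[OF that] by (auto simp: nonneg_costs_def)
  then have "(\<Sum>i<length cs. ennreal ((cs ! i) (xs ! i))) = ennreal (\<Sum>i<length cs. (cs ! i) (xs ! i))"
    and "0 \<le> (\<Sum>i<length cs. (cs ! i) (xs ! i))"
    by (auto intro: sum_ennreal sum_nonneg)
  moreover have "(\<Sum>i<length cs. ennreal (d ((x0 # xs) ! i) (xs ! i)))
      = ennreal (\<Sum>i<length cs. d ((x0 # xs) ! i) (xs ! i))"
    and "0 \<le> (\<Sum>i<length cs. d ((x0 # xs) ! i) (xs ! i))"
    using metric_on_nonneg[OF assms(1)] by (auto intro: sum_ennreal sum_nonneg)
  ultimately show ?thesis
    by (simp add: disc_cost_def sum.distrib ennreal_plus)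
qed

lemma disc_opt_attained:
  fixes cs :: "('x::finite \<Rightarrow> real) list"
  obtains xs where "length xs = length cs" "disc_opt d x0 cs = disc_cost d x0 cs xs"
proof -
  let ?S = "{xs :: 'x list. length xs = length cs}"
  have "finite ?S" using finite_lists_length_eq[of "UNIV :: 'x set"] by simp
  moreover have "?S \<noteq> {}" by (auto intro: exI[of _ "replicate (length cs) undefined"])
  ultimately have "disc_opt d x0 cs \<in> disc_cost d x0 cs ` ?S"
    unfolding disc_opt_def by (simp add: cInf_eq_Min)
  then show ?thesis using that by blast
qed

lemma disc_opt_nonneg:
  fixes cs :: "('x::finite \<Rightarrow> real) list"
  assumes "metric_on d" "nonneg_costs cs"
  shows "0 \<le> disc_opt d x0 cs"
  by (metis disc_opt_attained disc_cost_nonneg[OF assms])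

definition list_path :: "'x \<Rightarrow> 'x list \<Rightarrow> real \<Rightarrow> 'x" where
  "list_path x0 xs t = (x0 # xs) ! min (length xs) (nat \<lfloor>t\<rfloor>)"

lemma list_path_0 [simp]: "list_path x0 xs 0 = x0"
  by (simp add: list_path_def)

lemma list_path_slot: "t \<in> slot i \<Longrightarrow> i < length xs \<Longrightarrow> list_path x0 xs t = xs ! i"
  by (simp add: list_path_def slot_iff_floor nat_add_distrib)

lemma step_path_list_path: "step_path (list_path x0 xs)"
  unfolding step_path_def list_path_def
  by (intro allI impI conjI exI; rule eventually_floor_at_right eventually_floor_at_left)

lemma left_val_list_path:
  "left_val (list_path x0 xs) t = (x0 # xs) ! min (length xs) (nat (\<lceil>t\<rceil> - 1))"
  unfolding list_path_def by (rule left_val_eqI, rule eventually_floor_at_left)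

lemma jumps_list_path: "jumps (list_path x0 xs) \<subseteq> (\<lambda>i. real i + 1) ` {..<length xs}"
proof
  fix t assume t: "t \<in> jumps (list_path x0 xs)"
  let ?h = "\<lambda>k. (x0 # xs) ! min (length xs) (nat k)"
  have jump: "?h (\<lceil>t\<rceil> - 1) \<noteq> ?h \<lfloor>t\<rfloor>" and "0 < t"
    using t by (auto simp: jumps_def left_val_list_path list_path_def)
  then have "t \<in> \<int>" using ceiling_minus_one_eq_floor by fastforce
  then obtain k where k: "t = of_int k" by (auto elim: Ints_cases)
  with jump \<open>0 < t\<close> have "1 \<le> k" "k \<le> int (length xs)"
    by (auto simp: min_def split: if_splits)
  then show "t \<in> (\<lambda>i. real i + 1) ` {..<length xs}"
    using k by (intro image_eqI[of _ _ "nat (k - 1)"]) auto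
qed

lemma movement_cost_list_path_le:
  assumes "metric_on d"
  shows "movement_cost d (list_path x0 xs) \<le> (\<Sum>i<length xs. ennreal (d ((x0 # xs) ! i) (xs ! i)))"
proof -
  let ?\<rho> = "list_path x0 xs"
  let ?J = "(\<lambda>i. real i + 1) ` {..<length xs}"
  have "movement_cost d ?\<rho> = (\<Sum>t\<in>jumps ?\<rho>. ennreal (d (left_val ?\<rho> t) (?\<rho> t)))"
    unfolding movement_cost_def
    by (rule nn_integral_count_space_finite) (rule finite_subset[OF jumps_list_path], simp)
  also have "\<dots> \<le> (\<Sum>t\<in>?J. ennreal (d (left_val ?\<rho> t) (?\<rho> t)))"
    by (intro sum_mono2 jumps_list_path) simp_all
  also have "\<dots> = (\<Sum>i<length xs. ennreal (d (left_val ?\<rho> (real i + 1)) (?\<rho> (real i + 1))))"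
    by (subst sum.reindex) (auto simp: inj_on_def)
  also have "\<dots> = (\<Sum>i<length xs. ennreal (d ((x0 # xs) ! i) (xs ! i)))"
    by (intro sum.cong refl) (simp add: left_val_list_path list_path_slot[OF slot_start])
  finally show ?thesis .
qed

lemma cont_cost_list_path_le:
  assumes "metric_on d" "nonneg_costs cs" "length xs = length cs"
  shows "cont_cost d (embed_costs cs) (list_path x0 xs) \<le> ennreal (disc_cost d x0 cs xs)"
  unfolding cont_cost_def ennreal_disc_cost[OF assms]
proof (rule add_mono)
  show "service_cost (embed_costs cs) (list_path x0 xs) \<le> (\<Sum>i<length cs. ennreal ((cs ! i) (xs ! i)))"
    by (rule service_cost_embed_costs_le) (simp add: list_path_slot assms(3))
  show "movement_cost d (list_path x0 xs) \<le> (\<Sum>i<length cs. ennreal (d ((x0 # xs) ! i) (xs ! i)))"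
    using movement_cost_list_path_le[OF assms(1), of x0 xs] assms(3) by simp
qed

lemma cont_opt_embed_costs_le:
  fixes cs :: "('x::finite \<Rightarrow> real) list"
  assumes "metric_on d" "nonneg_costs cs"
  shows "cont_opt d x0 (embed_costs cs) \<le> ennreal (disc_opt d x0 cs)"
proof -
  obtain xs where xs: "length xs = length cs" "disc_opt d x0 cs = disc_cost d x0 cs xs"
    by (rule disc_opt_attained)
  have "cont_opt d x0 (embed_costs cs) \<le> cont_cost d (embed_costs cs) (list_path x0 xs)"
    unfolding cont_opt_def by (rule INF_lower) (simp add: step_path_list_path)
  also have "\<dots> \<le> ennreal (disc_opt d x0 cs)"
    using cont_cost_list_path_le[OF assms xs(1)] xs(2) by simp
  finally show ?thesis .
qed

section \<open>Movement of a step path\<close>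

lemma real_continuity_induct [consumes 1, case_names start right left]:
  fixes a b :: real
  assumes "a \<le> b" and "P a"
    and right: "\<And>s. a \<le> s \<Longrightarrow> s < b \<Longrightarrow> P s \<Longrightarrow> \<exists>e>0. \<forall>u. s < u \<and> u < s + e \<longrightarrow> P u"
    and left: "\<And>s. a < s \<Longrightarrow> s \<le> b \<Longrightarrow> (\<forall>u. a \<le> u \<and> u < s \<longrightarrow> P u) \<Longrightarrow> P s"
  shows "P b"
proof -
  define S where "S = {s. a \<le> s \<and> s \<le> b \<and> (\<forall>u. a \<le> u \<and> u \<le> s \<longrightarrow> P u)}"
  define m where "m = Sup S"
  have "a \<in> S" using assms(1,2) by (auto simp: S_def)
  have bdd: "bdd_above S" by (auto simp: S_def bdd_above_def)
  have "a \<le> m" unfolding m_def by (rule cSup_upper[OF \<open>a \<in> S\<close> bdd])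
  have "m \<le> b" unfolding m_def by (rule cSup_least) (use \<open>a \<in> S\<close> in \<open>auto simp: S_def\<close>)
  have below: "\<forall>u. a \<le> u \<and> u < m \<longrightarrow> P u"
  proof (intro allI impI)
    fix u assume u: "a \<le> u \<and> u < m"
    then obtain s where "s \<in> S" "u < s" using less_cSup_iff[OF _ bdd] \<open>a \<in> S\<close> by (auto simp: m_def)
    then show "P u" using u by (auto simp: S_def)
  qed
  have "P m" using left[of m] \<open>a \<le> m\<close> \<open>m \<le> b\<close> below \<open>P a\<close> by (cases "m = a") auto
  then have "m \<in> S" using \<open>a \<le> m\<close> \<open>m \<le> b\<close> below by (auto simp: S_def less_le)
  show "P b"
  proof (rule ccontr)
    assume "\<not> P b"
    with \<open>m \<le> b\<close> \<open>P m\<close> have "m < b" by (cases "m = b") auto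
    then obtain e where e: "e > 0" "\<forall>u. m < u \<and> u < m + e \<longrightarrow> P u"
      using right[OF \<open>a \<le> m\<close> _ \<open>P m\<close>] by blast
    define m' where "m' = min (m + e/2) b"
    have "m < m'" "m' \<le> b" "m' < m + e" using e \<open>m < b\<close> by (auto simp: m'_def)
    moreover have "P u" if "a \<le> u" "u \<le> m'" for u
      using that \<open>m \<in> S\<close> e(2) \<open>m' < m + e\<close> by (cases "u \<le> m") (auto simp: S_def)
    ultimately have "m' \<in> S" using \<open>a \<le> m\<close> by (simp add: S_def)
    then have "m' \<le> m" unfolding m_def by (rule cSup_upper[OF _ bdd])
    with \<open>m < m'\<close> show False by simp
  qed
qed

definition movement_during :: "('x \<Rightarrow> 'x \<Rightarrow> real) \<Rightarrow> (real \<Rightarrow> 'x) \<Rightarrow> real \<Rightarrow> real \<Rightarrow> ennreal" where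
  "movement_during d \<rho> a b =
     (\<integral>\<^sup>+ t. ennreal (d (left_val \<rho> t) (\<rho> t)) * indicator {a<..b} t \<partial>count_space (jumps \<rho>))"

lemma movement_during_split:
  assumes "a \<le> b" "b \<le> c"
  shows "movement_during d \<rho> a c = movement_during d \<rho> a b + movement_during d \<rho> b c"
proof -
  have "indicator {a<..c} t = (indicator {a<..b} t + indicator {b<..c} t :: ennreal)" for t
    using assms by (auto simp: indicator_def)
  then show ?thesis unfolding movement_during_def
    by (simp add: distrib_left nn_integral_add)
qed

lemma movement_during_le_movement_cost: "movement_during d \<rho> a b \<le> movement_cost d \<rho>"
  unfolding movement_during_def movement_cost_def
  by (rule nn_integral_mono) (simp add: indicator_def)

lemma left_val_dist_le_movement_during:
  assumes "metric_on d" "0 < s" "u < s"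
  shows "ennreal (d (left_val \<rho> s) (\<rho> s)) \<le> movement_during d \<rho> u s"
proof (cases "s \<in> jumps \<rho>")
  case True
  then have "ennreal (d (left_val \<rho> s) (\<rho> s))
      = (\<integral>\<^sup>+ t. ennreal (d (left_val \<rho> t) (\<rho> t)) * indicator {s} t \<partial>count_space (jumps \<rho>))"
    by (subst nn_integral_indicator_singleton) auto
  also have "\<dots> \<le> movement_during d \<rho> u s"
    unfolding movement_during_def using assms(3)
    by (intro nn_integral_mono) (auto simp: indicator_def)
  finally show ?thesis .
next
  case False
  then show ?thesis using assms(2) metric_on_refl[OF assms(1)] by (simp add: jumps_def)
qed

lemma dist_le_movement_during:
  assumes "step_path \<rho>" "metric_on d" "0 \<le> a" "a \<le> b"
  shows "ennreal (d (\<rho> a) (\<rho> b)) \<le> movement_during d \<rho> a b"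
  using \<open>a \<le> b\<close>
proof (induction b rule: real_continuity_induct)
  case start
  then show ?case using metric_on_refl[OF assms(2)] by simp
next
  case (right s)
  then have "\<forall>\<^sub>F u in at_right s. \<rho> u = \<rho> s" using assms by (auto simp: step_path_def)
  then obtain c where c: "c > s" "\<And>u. s < u \<Longrightarrow> u < c \<Longrightarrow> \<rho> u = \<rho> s"
    using eventually_at_right[of s "s + 1"] by auto
  have "ennreal (d (\<rho> a) (\<rho> u)) \<le> movement_during d \<rho> a u" if "s < u" "u < c" for u
  proof -
    have "movement_during d \<rho> a s \<le> movement_during d \<rho> a u"
      using movement_during_split[of a s u d \<rho>] right(1) that(1) by simp
    then show ?thesis using c(2)[OF that] right(3) by simp
  qed
  then show ?case using c(1) by (intro exI[of _ "c - s"]) auto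
next
  case (left s)
  with assms obtain x where x: "\<forall>\<^sub>F u in at_left s. \<rho> u = x"
    unfolding step_path_def by (meson le_less_trans)
  then obtain c where c: "c < s" "\<And>u. c < u \<Longrightarrow> u < s \<Longrightarrow> \<rho> u = x"
    using eventually_at_left[of "s - 1" s] by auto
  define u where "u = max ((c + s) / 2) a"
  have u: "a \<le> u" "u < s" "c < u" using c(1) left(1) by (auto simp: u_def less_max_iff_disj)
  then have "\<rho> u = x" by (intro c(2))
  have "ennreal (d x (\<rho> s)) \<le> movement_during d \<rho> u s"
    using left_val_dist_le_movement_during[OF assms(2) _ u(2), where \<rho> = \<rho>] left(1) assms(3)
      left_val_eqI[OF x]
    by simp
  moreover have "ennreal (d (\<rho> a) x) \<le> movement_during d \<rho> a u"
    using left(3) u \<open>\<rho> u = x\<close> by auto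
  moreover have "ennreal (d (\<rho> a) (\<rho> s)) \<le> ennreal (d (\<rho> a) x) + ennreal (d x (\<rho> s))"
    by (rule ennreal_metric_on_triangle[OF assms(2)])
  ultimately show ?case
    using movement_during_split[of a u s d \<rho>] u by (auto intro: order_trans add_mono)
qed

lemma sum_dist_le_movement_cost:
  assumes "step_path \<rho>" "metric_on d" "0 \<le> \<tau> 0" "\<And>i. i < n \<Longrightarrow> \<tau> i \<le> \<tau> (Suc i)"
  shows "(\<Sum>i<n. ennreal (d (\<rho> (\<tau> i)) (\<rho> (\<tau> (Suc i))))) \<le> movement_cost d \<rho>"
proof -
  have "(\<Sum>i<n. ennreal (d (\<rho> (\<tau> i)) (\<rho> (\<tau> (Suc i))))) \<le> movement_during d \<rho> (\<tau> 0) (\<tau> n)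
      \<and> \<tau> 0 \<le> \<tau> n"
    using assms(4)
  proof (induction n)
    case (Suc n)
    then have IH: "(\<Sum>i<n. ennreal (d (\<rho> (\<tau> i)) (\<rho> (\<tau> (Suc i))))) \<le> movement_during d \<rho> (\<tau> 0) (\<tau> n)"
      and "\<tau> 0 \<le> \<tau> n" "\<tau> n \<le> \<tau> (Suc n)" by auto
    moreover have "ennreal (d (\<rho> (\<tau> n)) (\<rho> (\<tau> (Suc n)))) \<le> movement_during d \<rho> (\<tau> n) (\<tau> (Suc n))"
      using assms(1-3) \<open>\<tau> 0 \<le> \<tau> n\<close> \<open>\<tau> n \<le> \<tau> (Suc n)\<close> by (intro dist_le_movement_during) auto
    ultimately show ?case
      using movement_during_split[of "\<tau> 0" "\<tau> n" "\<tau> (Suc n)" d \<rho>] by (auto intro: add_mono)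
  qed (simp add: movement_during_def)
  then show ?thesis using movement_during_le_movement_cost order_trans by blast
qed

definition law :: "'w measure \<Rightarrow> ('w \<Rightarrow> 'b::countable) \<Rightarrow> 'b pmf" where
  "law M f = Abs_pmf (distr M (count_space UNIV) f)"

lemma measure_pmf_law:
  assumes "prob_space M" "f \<in> measurable M (count_space UNIV)"
  shows "measure_pmf (law M f) = distr M (count_space UNIV) f"
  unfolding law_def
proof (rule Abs_pmf_inverse, safe)
  show N: "prob_space (distr M (count_space UNIV) f)"
    by (rule prob_space.prob_space_distr[OF assms])
  interpret N: prob_space "distr M (count_space UNIV) f" by (fact N)
  show "AE x in distr M (count_space UNIV) f. measure (distr M (count_space UNIV) f) {x} \<noteq> 0"
    by (subst N.AE_support_countable) auto
qed auto

lemma map_pmf_law: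
  assumes "prob_space M" "f \<in> measurable M (count_space UNIV)"
  shows "map_pmf g (law M f) = law M (g \<circ> f)"
  using assms by (intro measure_pmf_inject[THEN iffD1])
    (simp add: map_pmf_rep_eq measure_pmf_law distr_distr)

lemma law_cong: "(\<And>w. w \<in> space M \<Longrightarrow> f w = g w) \<Longrightarrow> law M f = law M g"
  unfolding law_def by (metis distr_cong)

lemma set_pmf_law:
  assumes "prob_space M" "f \<in> measurable M (count_space UNIV)"
  shows "set_pmf (law M f) \<subseteq> f ` space M"
proof
  fix y assume "y \<in> set_pmf (law M f)"
  then have "measure (distr M (count_space UNIV) f) {y} \<noteq> 0"
    using measure_pmf_law[OF assms] by (metis measure_pmf_single pmf_positive less_irrefl)
  then have "f -` {y} \<inter> space M \<noteq> {}" using assms(2) by (auto simp: measure_distr)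
  then show "y \<in> f ` space M" by auto
qed

lemma nn_integral_law:
  assumes "prob_space M" "f \<in> measurable M (count_space UNIV)"
  shows "(\<integral>\<^sup>+ y. h y \<partial>measure_pmf (law M f)) = (\<integral>\<^sup>+ w. h (f w) \<partial>M)"
  using assms by (simp add: measure_pmf_law nn_integral_distr)

section \<open>The discretized algorithm\<close>

text \<open>Sampling at rational times keeps \<open>visited\<close> measurable in the random seed; by
  right-continuity of step paths no occupied state is missed.\<close>

definition visited :: "(real \<Rightarrow> 'x) \<Rightarrow> nat \<Rightarrow> 'x set" where
  "visited \<rho> i = {\<rho> (of_rat q) | q. of_rat q \<in> slot i}"

lemma visited_nonempty: "visited \<rho> i \<noteq> {}"
proof -
  obtain q :: rat where "real i + 1 < of_rat q" "of_rat q < real i + 2"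
    using of_rat_dense[of "real i + 1" "real i + 2"] by auto
  then show ?thesis unfolding visited_def slot_def by fastforce
qed

lemma visitedE:
  assumes "x \<in> visited \<rho> i"
  obtains t where "t \<in> slot i" "\<rho> t = x"
  using assms unfolding visited_def by blast

lemma step_path_in_visited:
  assumes "step_path \<rho>" "t \<in> slot i"
  shows "\<rho> t \<in> visited \<rho> i"
proof -
  have "\<forall>\<^sub>F u in at_right t. \<rho> u = \<rho> t" using assms slot_nonneg by (auto simp: step_path_def)
  then obtain c where c: "c > t" "\<And>u. t < u \<Longrightarrow> u < c \<Longrightarrow> \<rho> u = \<rho> t"
    using eventually_at_right[of t "t + 1"] by auto
  obtain q :: rat where q: "t < of_rat q" "of_rat q < min c (real i + 2)"
    using of_rat_dense[of t "min c (real i + 2)"] c assms(2) by (auto simp: slot_def)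
  then have "of_rat q \<in> slot i" "\<rho> (of_rat q) = \<rho> t" using c assms(2) by (auto simp: slot_def)
  then show ?thesis unfolding visited_def by (intro CollectI exI[of _ q]) simp
qed

lemma measurable_visited:
  fixes \<rho> :: "'w \<Rightarrow> real \<Rightarrow> 'x::finite"
  assumes [measurable]: "\<And>t. (\<lambda>w. \<rho> w t) \<in> measurable M (count_space UNIV)"
  shows "(\<lambda>w. visited (\<rho> w) i) \<in> measurable M (count_space UNIV)"
proof -
  have [measurable]: "Measurable.pred M (\<lambda>w. x \<in> visited (\<rho> w) i)" for x
  proof -
    have "(\<lambda>w. x \<in> visited (\<rho> w) i) = (\<lambda>w. \<exists>q::rat. of_rat q \<in> slot i \<and> \<rho> w (of_rat q) = x)"
      by (auto simp: visited_def)
    then show ?thesis by (simp only:) measurable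
  qed
  show ?thesis
  proof (subst measurable_count_space_eq2_countable, safe)
    fix V :: "'x set"
    have "(\<lambda>w. visited (\<rho> w) i) -` {V} \<inter> space M = {w \<in> space M. \<forall>x. x \<in> visited (\<rho> w) i \<longleftrightarrow> x \<in> V}"
      by auto
    also have "\<dots> \<in> sets M" by measurable
    finally show "(\<lambda>w. visited (\<rho> w) i) -` {V} \<inter> space M \<in> sets M" .
  qed simp
qed

definition discretize :: "('x \<Rightarrow> real) list \<Rightarrow> (real \<Rightarrow> 'x) \<Rightarrow> 'x list" where
  "discretize cs \<rho> = map (\<lambda>i. arg_min_on (cs ! i) (visited \<rho> i)) [0..<length cs]"

lemma length_discretize [simp]: "length (discretize cs \<rho>) = length cs"
  by (simp add: discretize_def)

lemma discretize_nth_visited: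
  fixes \<rho> :: "real \<Rightarrow> 'x::finite"
  shows "i < length cs \<Longrightarrow> discretize cs \<rho> ! i \<in> visited \<rho> i"
  by (simp add: discretize_def arg_min_if_finite(1) visited_nonempty)

lemma discretize_nth_le:
  fixes \<rho> :: "real \<Rightarrow> 'x::finite"
  shows "i < length cs \<Longrightarrow> x \<in> visited \<rho> i \<Longrightarrow> (cs ! i) (discretize cs \<rho> ! i) \<le> (cs ! i) x"
  by (simp add: discretize_def arg_min_least visited_nonempty)

lemma take_discretize:
  assumes "\<And>t. 0 \<le> t \<Longrightarrow> t < real k + 1 \<Longrightarrow> \<rho>' t = \<rho> t"
  shows "take k (discretize cs \<rho>) = discretize (take k cs) \<rho>'"
proof -
  have "visited \<rho>' i = visited \<rho> i" if "i < k" for i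
  proof -
    have "\<rho>' t = \<rho> t" if "t \<in> slot i" for t
      using that \<open>i < k\<close> by (intro assms) (auto simp: slot_def)
    then show ?thesis unfolding visited_def by (intro Collect_cong ex_cong1) auto
  qed
  then show ?thesis by (intro nth_equalityI) (auto simp: discretize_def)
qed

lemma measurable_discretize:
  fixes \<rho> :: "'w \<Rightarrow> real \<Rightarrow> 'x::finite"
  assumes "\<And>t. (\<lambda>w. \<rho> w t) \<in> measurable M (count_space UNIV)"
  shows "(\<lambda>w. discretize cs (\<rho> w)) \<in> measurable M (count_space UNIV)"
proof (subst measurable_count_space_eq2_countable, safe)
  have [measurable]: "(\<lambda>w. arg_min_on (cs ! i) (visited (\<rho> w) i)) \<in> measurable M (count_space UNIV)" for i
    using measurable_visited[OF assms] by (rule measurable_compose) simp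
  fix ys :: "'x list"
  have eq: "discretize cs (\<rho> w) = ys \<longleftrightarrow> length ys = length cs
      \<and> (\<forall>i\<in>{..<length cs}. arg_min_on (cs ! i) (visited (\<rho> w) i) = ys ! i)" for w
    unfolding discretize_def list_eq_iff_nth_eq by auto
  have "(\<lambda>w. discretize cs (\<rho> w)) -` {ys} \<inter> space M
      = {w \<in> space M. length ys = length cs
           \<and> (\<forall>i\<in>{..<length cs}. arg_min_on (cs ! i) (visited (\<rho> w) i) = ys ! i)}"
    using eq by blast
  also have "\<dots> \<in> sets M"
    by measurable
  finally show "(\<lambda>w. discretize cs (\<rho> w)) -` {ys} \<inter> space M \<in> sets M" .
qed simp

lemma sum_dist_slots_le_movement_cost:
  assumes "step_path \<rho>" "metric_on d" "\<rho> 0 = x0"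
    and visits: "\<And>i. i < length xs \<Longrightarrow> \<exists>t\<in>slot i. \<rho> t = xs ! i"
  shows "(\<Sum>i<length xs. ennreal (d ((x0 # xs) ! i) (xs ! i))) \<le> movement_cost d \<rho>"
proof -
  define \<sigma> where "\<sigma> i = (SOME t. t \<in> slot i \<and> \<rho> t = xs ! i)" for i
  have \<sigma>: "\<sigma> i \<in> slot i \<and> \<rho> (\<sigma> i) = xs ! i" if "i < length xs" for i
    unfolding \<sigma>_def by (rule someI_ex) (use visits[OF that] in blast)
  define \<tau> where "\<tau> = case_nat 0 \<sigma>"
  have "\<tau> i \<le> \<tau> (Suc i)" if "i < length xs" for i
  proof (cases i)
    case 0
    then show ?thesis using \<sigma>[OF that] slot_nonneg[of "\<sigma> 0" 0] by (simp add: \<tau>_def)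
  next
    case (Suc j)
    then have "\<sigma> j \<in> slot j" "\<sigma> i \<in> slot i" using \<sigma> that by auto
    then show ?thesis using Suc by (simp add: \<tau>_def slot_def)
  qed
  moreover have "\<rho> (\<tau> i) = (x0 # xs) ! i" if "i < length xs" for i
    using \<sigma> that assms(3) by (cases i) (simp_all add: \<tau>_def)
  moreover have "\<rho> (\<tau> (Suc i)) = xs ! i" if "i < length xs" for i
    using \<sigma> that by (simp add: \<tau>_def)
  moreover have "0 \<le> \<tau> 0" by (simp add: \<tau>_def)
  ultimately show ?thesis
    using sum_dist_le_movement_cost[OF assms(1,2), of \<tau> "length xs"] by simp
qed

lemma disc_cost_discretize_le:
  fixes \<rho> :: "real \<Rightarrow> 'x::finite"
  assumes "metric_on d" "nonneg_costs cs" "step_path \<rho>" "\<rho> 0 = x0"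
  shows "ennreal (disc_cost d x0 cs (discretize cs \<rho>)) \<le> cont_cost d (embed_costs cs) \<rho>"
  unfolding cont_cost_def ennreal_disc_cost[OF assms(1,2) length_discretize]
proof (rule add_mono)
  show "(\<Sum>i<length cs. ennreal ((cs ! i) (discretize cs \<rho> ! i))) \<le> service_cost (embed_costs cs) \<rho>"
    using assms(3) by (intro service_cost_embed_costs_ge discretize_nth_le step_path_in_visited)
  show "(\<Sum>i<length cs. ennreal (d ((x0 # discretize cs \<rho>) ! i) (discretize cs \<rho> ! i)))
      \<le> movement_cost d \<rho>"
  proof -
    have "\<exists>t\<in>slot i. \<rho> t = discretize cs \<rho> ! i" if "i < length cs" for i
      using discretize_nth_visited[OF that] by (blast elim: visitedE)
    then have "(\<Sum>i<length (discretize cs \<rho>). ennreal (d ((x0 # discretize cs \<rho>) ! i) (discretize cs \<rho> ! i)))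
        \<le> movement_cost d \<rho>"
      by (intro sum_dist_slots_le_movement_cost[OF assms(3,1,4)]) simp
    then show ?thesis by simp
  qed
qed

definition discretized_alg ::
  "'w measure \<Rightarrow> ('w \<Rightarrow> (real \<Rightarrow> 'x \<Rightarrow> real) \<Rightarrow> real \<Rightarrow> 'x) \<Rightarrow> ('x::finite \<Rightarrow> real) list \<Rightarrow> 'x list pmf"
  where "discretized_alg M A cs = law M (\<lambda>w. discretize cs (A w (embed_costs cs)))"

lemma measurable_discretized_run:
  fixes A :: "'w \<Rightarrow> (real \<Rightarrow> 'x::finite \<Rightarrow> real) \<Rightarrow> real \<Rightarrow> 'x"
  assumes "cont_online_alg d x0 M A" "nonneg_costs cs"
  shows "(\<lambda>w. discretize cs (A w (embed_costs cs))) \<in> measurable M (count_space UNIV)"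
  using assms cost_path_embed_costs[OF assms(2)]
  by (intro measurable_discretize) (simp add: cont_online_alg_def)

lemma set_pmf_discretized_alg:
  fixes A :: "'w \<Rightarrow> (real \<Rightarrow> 'x::finite \<Rightarrow> real) \<Rightarrow> real \<Rightarrow> 'x"
  assumes "cont_online_alg d x0 M A" "nonneg_costs cs"
  shows "set_pmf (discretized_alg M A cs) \<subseteq> {xs. length xs = length cs}"
  using set_pmf_law[OF _ measurable_discretized_run[OF assms]] assms(1)
  by (auto simp: discretized_alg_def cont_online_alg_def)

lemma disc_online_alg_discretized_alg:
  fixes A :: "'w \<Rightarrow> (real \<Rightarrow> 'x::finite \<Rightarrow> real) \<Rightarrow> real \<Rightarrow> 'x"
  assumes "cont_online_alg d x0 M A"
  shows "disc_online_alg (discretized_alg M A)"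
  unfolding disc_online_alg_def
proof (intro allI impI conjI)
  fix cs :: "('x \<Rightarrow> real) list" and k assume cs: "nonneg_costs cs"
  then have cs_k: "nonneg_costs (take k cs)" by (auto simp: nonneg_costs_def dest: in_set_takeD)
  have M: "prob_space M" using assms by (simp add: cont_online_alg_def)
  note run = measurable_discretized_run[OF assms cs]
  show "\<forall>xs\<in>set_pmf (discretized_alg M A cs). length xs = length cs"
    using set_pmf_discretized_alg[OF assms cs] by auto
  have "A w (embed_costs (take k cs)) t = A w (embed_costs cs) t"
    if "w \<in> space M" "0 \<le> t" "t < real k + 1" for w t
  proof -
    have "\<forall>s\<in>{0..t}. embed_costs (take k cs) s = embed_costs cs s"
      using that(3) by (auto intro: embed_costs_take)
    then show ?thesis
      using assms that(1) cost_path_embed_costs[OF cs] cost_path_embed_costs[OF cs_k]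
      unfolding cont_online_alg_def by blast
  qed
  then have "take k (discretize cs (A w (embed_costs cs)))
      = discretize (take k cs) (A w (embed_costs (take k cs)))" if "w \<in> space M" for w
    using that by (intro take_discretize) auto
  then show "map_pmf (take k) (discretized_alg M A cs) = discretized_alg M A (take k cs)"
    unfolding discretized_alg_def map_pmf_law[OF M run] by (intro law_cong) simp
qed

lemma expected_cost_discretized_alg_le:
  fixes A :: "'w \<Rightarrow> (real \<Rightarrow> 'x::finite \<Rightarrow> real) \<Rightarrow> real \<Rightarrow> 'x"
  assumes "cont_online_alg d x0 M A" "metric_on d" "nonneg_costs cs"
  shows "ennreal (measure_pmf.expectation (discretized_alg M A cs) (disc_cost d x0 cs))
      \<le> (\<integral>\<^sup>+ w. cont_cost d (embed_costs cs) (A w (embed_costs cs)) \<partial>M)"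
proof -
  have M: "prob_space M" using assms by (simp add: cont_online_alg_def)
  note run = measurable_discretized_run[OF assms(1,3)]
  have "finite (set_pmf (discretized_alg M A cs))"
    using set_pmf_discretized_alg[OF assms(1,3)] finite_lists_length_eq[of "UNIV :: 'x set"]
    by (auto intro: finite_subset)
  then have "ennreal (measure_pmf.expectation (discretized_alg M A cs) (disc_cost d x0 cs))
      = (\<integral>\<^sup>+ xs. ennreal (disc_cost d x0 cs xs) \<partial>discretized_alg M A cs)"
    using disc_cost_nonneg[OF assms(2,3)]
    by (intro nn_integral_eq_integral[symmetric] integrable_measure_pmf_finite) auto
  also have "\<dots> = (\<integral>\<^sup>+ w. ennreal (disc_cost d x0 cs (discretize cs (A w (embed_costs cs)))) \<partial>M)"
    unfolding discretized_alg_def by (rule nn_integral_law[OF M run])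
  also have "\<dots> \<le> (\<integral>\<^sup>+ w. cont_cost d (embed_costs cs) (A w (embed_costs cs)) \<partial>M)"
    using assms cost_path_embed_costs[OF assms(3)]
    by (intro nn_integral_mono disc_cost_discretize_le) (auto simp: cont_online_alg_def)
  finally show ?thesis .
qed

lemma discretized_alg_competitive:
  fixes A :: "'w \<Rightarrow> (real \<Rightarrow> 'x::finite \<Rightarrow> real) \<Rightarrow> real \<Rightarrow> 'x"
  assumes "cont_online_alg d x0 M A" "metric_on d" "0 \<le> \<alpha>"
    and competitive: "\<And>c. cost_path c \<Longrightarrow>
      (\<integral>\<^sup>+ w. cont_cost d c (A w c) \<partial>M) \<le> ennreal \<alpha> * cont_opt d x0 c + ennreal \<beta>"
    and cs: "nonneg_costs cs"
  shows "measure_pmf.expectation (discretized_alg M A cs) (disc_cost d x0 cs)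
      \<le> \<alpha> * disc_opt d x0 cs + max \<beta> 0"
proof -
  \<comment> \<open>\<open>ennreal \<beta> = 0\<close> for negative \<open>\<beta>\<close>, hence the additive constant \<open>max \<beta> 0\<close>.\<close>
  have opt: "0 \<le> disc_opt d x0 cs" by (rule disc_opt_nonneg[OF assms(2) cs])
  have "ennreal (measure_pmf.expectation (discretized_alg M A cs) (disc_cost d x0 cs))
      \<le> ennreal \<alpha> * cont_opt d x0 (embed_costs cs) + ennreal \<beta>"
    using expected_cost_discretized_alg_le[OF assms(1,2) cs]
      competitive[OF cost_path_embed_costs[OF cs]] by (rule order_trans)
  also have "\<dots> \<le> ennreal \<alpha> * ennreal (disc_opt d x0 cs) + ennreal (max \<beta> 0)"
    by (intro add_mono mult_left_mono cont_opt_embed_costs_le[OF assms(2) cs] ennreal_leI) auto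
  also have "\<dots> = ennreal (\<alpha> * disc_opt d x0 cs + max \<beta> 0)"
    using assms(3) opt by (simp add: ennreal_mult ennreal_plus)
  finally have "ennreal (measure_pmf.expectation (discretized_alg M A cs) (disc_cost d x0 cs))
      \<le> ennreal (\<alpha> * disc_opt d x0 cs + max \<beta> 0)" .
  moreover have "0 \<le> \<alpha> * disc_opt d x0 cs + max \<beta> 0" using assms(3) opt by simp
  ultimately show ?thesis using ennreal_le_iff by blast
qed

theorem mainTheorem4:
  fixes d :: "'x::finite \<Rightarrow> 'x \<Rightarrow> real" and \<alpha> :: real
  assumes "metric_on d"
    and "\<alpha> \<ge> 1"
    and "cont_competitive TYPE('w) d \<alpha>"
  shows "disc_competitive d \<alpha>"
  unfolding disc_competitive_def
proof
  fix x0
  from assms(3) obtain M :: "'w measure" and A \<beta> where alg: "cont_online_alg d x0 M A"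
    and competitive: "\<And>c. cost_path c \<Longrightarrow>
      (\<integral>\<^sup>+ w. cont_cost d c (A w c) \<partial>M) \<le> ennreal \<alpha> * cont_opt d x0 c + ennreal \<beta>"
    unfolding cont_competitive_def by blast
  have "\<alpha> \<ge> 0" using assms(2) by simp
  show "\<exists>P \<beta>. disc_online_alg P \<and> (\<forall>cs. nonneg_costs cs \<longrightarrow>
      measure_pmf.expectation (P cs) (disc_cost d x0 cs) \<le> \<alpha> * disc_opt d x0 cs + \<beta>)"
    using disc_online_alg_discretized_alg[OF alg]
      discretized_alg_competitive[OF alg assms(1) \<open>\<alpha> \<ge> 0\<close> competitive] by blast
qed

end
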